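(* Let $A\in\mathbb{R}^{n\times n}$, $A\ge0$ entrywise, be the weighted adjacency matrix of a directed stem-bud network with $\rho(A)<1$. If the weights of any of its stem edges are increased by nonnegative amounts (i.e., $A$ is replaced by $A+\sum_{q\in S}w_qe_{q+1}e_q^{\top}$ with $w_q\ge0$ and $S$ a set of stem edges), then the resulting matrix still has spectral radius less than $1$.
   Context: A directed stem-bud network on $n$ nodes has a junction $y\in\{1,\dots,n-1\}$ and weighted adjacency matrix $A=(a_{pq})$ whose only possibly nonzero entries are $a_{q+1,q}$ ($q=1,\dots,n-1$) and $a_{yn}$; $a_{pq}$ is the weight of edge $q\to p$. The stem consists of the edges $q\to q+1$ for $q=1,\dots,y-1$; the bud is the cycle $y\to\cdots\to n\to y$. For a directed line network ($a_{yn}=0$) all edges belong to the stem. $\rho$ is the spectral radius. *)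

theory Defs
  imports "Jordan_Normal_Form.Spectral_Radius"
begin

text \<open>Nodes are numbered 1..n as in the paper; the matrix entry a_pq (weight of the
edge q -> p) is stored at the 0-based position (p-1, q-1).\<close>

definition entry :: "real mat \<Rightarrow> nat \<Rightarrow> nat \<Rightarrow> real" where
  "entry A p q = A $$ (p - 1, q - 1)"

definition stem_bud_network :: "nat \<Rightarrow> nat \<Rightarrow> real mat \<Rightarrow> bool" where
  "stem_bud_network n y A \<longleftrightarrow> A \<in> carrier_mat n n \<and> 1 \<le> y \<and> y \<le> n - 1 \<and>
     (\<forall>p q. 1 \<le> p \<and> p \<le> n \<and> 1 \<le> q \<and> q \<le> n \<and> entry A p q \<noteq> 0 \<longrightarrow>
        (p = q + 1 \<or> (p = y \<and> q = n)))"

definition nonneg_mat :: "real mat \<Rightarrow> bool" where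
  "nonneg_mat A \<longleftrightarrow> (\<forall>i < dim_row A. \<forall>j < dim_col A. A $$ (i, j) \<ge> 0)"

text \<open>Stem edges, indexed by q (edge q -> q+1): q = 1..y-1 in general; for a directed
line network (a_{yn} = 0) all edges q = 1..n-1 belong to the stem.\<close>
definition stem_edges :: "nat \<Rightarrow> nat \<Rightarrow> real mat \<Rightarrow> nat set" where
  "stem_edges n y A = (if entry A y n = 0 then {1..<n} else {1..<y})"

definition edge_increment :: "nat \<Rightarrow> nat set \<Rightarrow> (nat \<Rightarrow> real) \<Rightarrow> real mat" where
  "edge_increment n S w = mat n n (\<lambda>(i, j). if i = j + 1 \<and> j + 1 \<in> S then w (j + 1) else 0)"

definition rho :: "real mat \<Rightarrow> real" where
  "rho A = spectral_radius (map_mat complex_of_real A)"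

end

theory Submission
  imports Defs
begin

text \<open>Index the nodes from 0 and let k be the junction. An eigenvector v for an eigenvalue
\<mu> \<noteq> 0 vanishes on the stem before k, and along the bud v(k + d) \<mu>^d is the product of the
first d bud edge weights times v(k) \<noteq> 0; closing the cycle gives \<mu>^(n-k) = c, the product of
all bud edge weights, and conversely every such \<mu> is an eigenvalue. Hence \<rho> = c^(1/(n-k))
depends only on the bud, and changing stem weights does not change it.\<close>

text \<open>0-based: the bud edge n-1 \<rightarrow> k sits at entry (k, n-1), so k is the paper's y - 1.\<close>

definition stem_bud_mat :: "nat \<Rightarrow> nat \<Rightarrow> 'a::zero mat \<Rightarrow> bool" where
  "stem_bud_mat n k B \<longleftrightarrow> B \<in> carrier_mat n n \<and> k + 1 < n \<and>
     (\<forall>i<n. \<forall>j<n. B $$ (i, j) \<noteq> 0 \<longrightarrow> i = j + 1 \<or> (i = k \<and> j = n - 1))"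

definition bud_cycle_weight :: "nat \<Rightarrow> nat \<Rightarrow> 'a::comm_semiring_1 mat \<Rightarrow> 'a" where
  "bud_cycle_weight n k B = B $$ (k, n - 1) * (\<Prod>j\<in>{k..<n - 1}. B $$ (j + 1, j))"

lemma stem_bud_mat_mult_vec_index:
  fixes B :: "'a::comm_semiring_1 mat"
  assumes B: "stem_bud_mat n k B" and v: "dim_vec v = n" and i: "i < n"
  shows "(B *\<^sub>v v) $ i = (if 0 < i then B $$ (i, i - 1) * v $ (i - 1) else 0)
     + (if i = k then B $$ (k, n - 1) * v $ (n - 1) else 0)"
proof -
  have B_carrier: "B \<in> carrier_mat n n" and kn: "k + 1 < n"
    using B unfolding stem_bud_mat_def by auto
  have B_zero: "B $$ (i, j) = 0" if "j < n" "j + 1 \<noteq> i" "\<not> (i = k \<and> j = n - 1)" for j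
    using B i that unfolding stem_bud_mat_def by blast
  have entry_split: "B $$ (i, j) * v $ j =
      (if j = i - 1 then (if 0 < i then B $$ (i, i - 1) * v $ (i - 1) else 0) else 0)
    + (if j = n - 1 then (if i = k then B $$ (k, n - 1) * v $ (n - 1) else 0) else 0)"
    if "j < n" for j
  proof (cases "j + 1 = i")
    case True
    then have "j = i - 1" "0 < i" "j \<noteq> n - 1" using i by auto
    then show ?thesis by simp
  next
    case False
    then show ?thesis using B_zero[OF that False] kn by (cases "i = k \<and> j = n - 1") auto
  qed
  have "(B *\<^sub>v v) $ i = (\<Sum>j<n. B $$ (i, j) * v $ j)"
    using B_carrier i v by (simp add: scalar_prod_def atLeast0LessThan)
  also have "\<dots> = (\<Sum>j<n. (if j = i - 1 then (if 0 < i then B $$ (i, i - 1) * v $ (i - 1) else 0) else 0)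
    + (if j = n - 1 then (if i = k then B $$ (k, n - 1) * v $ (n - 1) else 0) else 0))"
    by (intro sum.cong refl entry_split) simp
  also have "\<dots> = (if 0 < i then B $$ (i, i - 1) * v $ (i - 1) else 0)
     + (if i = k then B $$ (k, n - 1) * v $ (n - 1) else 0)"
    using i by (simp add: sum.distrib less_imp_diff_less)
  finally show ?thesis .
qed

lemma stem_bud_mat_eigenvalue_power:
  fixes B :: "'a::idom mat"
  assumes B: "stem_bud_mat n k B" and ev: "eigenvector B v \<mu>" and \<mu>: "\<mu> \<noteq> 0"
  shows "\<mu> ^ (n - k) = bud_cycle_weight n k B"
proof -
  have kn: "k + 1 < n" using B unfolding stem_bud_mat_def by simp
  have v: "dim_vec v = n" and v_nonzero: "v \<noteq> 0\<^sub>v n" and Bv: "B *\<^sub>v v = \<mu> \<cdot>\<^sub>v v"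
    using ev B unfolding eigenvector_def stem_bud_mat_def by auto
  have eigen_eq: "\<mu> * v $ i = (if 0 < i then B $$ (i, i - 1) * v $ (i - 1) else 0)
     + (if i = k then B $$ (k, n - 1) * v $ (n - 1) else 0)" if "i < n" for i
    using stem_bud_mat_mult_vec_index[OF B v that] arg_cong[OF Bv, of "\<lambda>u. u $ i"] that v by simp
  have stem_zero: "v $ i = 0" if "i < k" for i
    using that
  proof (induction i)
    case (Suc i)
    then show ?case using eigen_eq[of "Suc i"] kn \<mu> by simp
  qed (use eigen_eq[of 0] kn \<mu> in simp)
  have bud_path: "v $ (k + d) * \<mu> ^ d = (\<Prod>j\<in>{k..<k + d}. B $$ (j + 1, j)) * v $ k"
    if "k + d < n" for d
    using that
  proof (induction d)
    case (Suc d)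
    have "v $ (k + Suc d) * \<mu> ^ Suc d = B $$ (k + Suc d, k + d) * (v $ (k + d) * \<mu> ^ d)"
      using eigen_eq[of "k + Suc d"] Suc.prems by (simp add: algebra_simps)
    also have "\<dots> = B $$ (k + Suc d, k + d) * ((\<Prod>j\<in>{k..<k + d}. B $$ (j + 1, j)) * v $ k)"
      using Suc by simp
    also have "\<dots> = (\<Prod>j\<in>{k..<k + Suc d}. B $$ (j + 1, j)) * v $ k"
      by (simp add: prod.atLeastLessThan_Suc algebra_simps)
    finally show ?case .
  qed simp
  have vk: "v $ k \<noteq> 0"
  proof
    assume "v $ k = 0"
    then have "v $ i = 0" if "i < n" for i
      using stem_zero bud_path[of "i - k"] that \<mu> by (cases "i < k") auto
    then have "v = 0\<^sub>v n" using v by (intro eq_vecI) auto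
    with v_nonzero show False ..
  qed
  have bud_entry: "\<mu> * v $ k = B $$ (k, n - 1) * v $ (n - 1)"
    using eigen_eq[of k] kn stem_zero[of "k - 1"] by (cases "0 < k") auto
  have "\<mu> ^ (n - k) * v $ k = \<mu> ^ (n - 1 - k) * (\<mu> * v $ k)"
    using kn by (simp add: Suc_diff_Suc flip: power_Suc2)
  also have "\<dots> = B $$ (k, n - 1) * (v $ (k + (n - 1 - k)) * \<mu> ^ (n - 1 - k))"
    using kn by (simp add: bud_entry)
  also have "\<dots> = bud_cycle_weight n k B * v $ k"
    using bud_path[of "n - 1 - k"] kn unfolding bud_cycle_weight_def by simp
  finally show ?thesis using vk by simp
qed

lemma stem_bud_mat_eigenvalueI:
  fixes B :: "'a::field mat"
  assumes B: "stem_bud_mat n k B" and \<mu>: "\<mu> \<noteq> 0" and root: "\<mu> ^ (n - k) = bud_cycle_weight n k B"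
  shows "eigenvalue B \<mu>"
proof -
  have B_carrier: "B \<in> carrier_mat n n" and kn: "k + 1 < n"
    using B unfolding stem_bud_mat_def by auto
  define v where "v = vec n (\<lambda>i. if i < k then 0 else (\<Prod>j\<in>{k..<i}. B $$ (j + 1, j)) / \<mu> ^ (i - k))"
  have v: "dim_vec v = n" unfolding v_def by simp
  have v_index: "v $ i = (if i < k then 0 else (\<Prod>j\<in>{k..<i}. B $$ (j + 1, j)) / \<mu> ^ (i - k))"
    if "i < n" for i
    using that unfolding v_def by simp
  have vk: "v $ k = 1" using v_index[of k] kn by simp
  have "(B *\<^sub>v v) $ i = \<mu> * v $ i" if i: "i < n" for i
  proof (cases rule: linorder_cases[of i k])
    case less
    then show ?thesis using stem_bud_mat_mult_vec_index[OF B v i] v_index i by simp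
  next
    case equal
    have "B $$ (k, n - 1) * v $ (n - 1) = bud_cycle_weight n k B / \<mu> ^ (n - 1 - k)"
      using v_index[of "n - 1"] kn unfolding bud_cycle_weight_def by simp
    also have "\<dots> = \<mu> ^ Suc (n - 1 - k) / \<mu> ^ (n - 1 - k)"
      using root kn by (simp add: Suc_diff_Suc)
    also have "\<dots> = \<mu>"
      using \<mu> by simp
    finally show ?thesis
      using stem_bud_mat_mult_vec_index[OF B v i] v_index[of "k - 1"] vk equal kn by auto
  next
    case greater
    then obtain d where d: "i = Suc (k + d)" using less_imp_Suc_add by blast
    have "(B *\<^sub>v v) $ i = B $$ (i, k + d) * ((\<Prod>j\<in>{k..<k + d}. B $$ (j + 1, j)) / \<mu> ^ d)"
      using stem_bud_mat_mult_vec_index[OF B v i] v_index[of "k + d"] greater d i by simp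
    also have "\<dots> = \<mu> * v $ i"
      using v_index[of i] i d \<mu> by (simp add: prod.atLeastLessThan_Suc field_simps)
    finally show ?thesis .
  qed
  then have "B *\<^sub>v v = \<mu> \<cdot>\<^sub>v v"
    using B_carrier v by (intro eq_vecI) auto
  moreover have "v \<noteq> 0\<^sub>v n"
    using vk kn by auto
  ultimately have "eigenvector B v \<mu>"
    using B_carrier v unfolding eigenvector_def by auto
  then show ?thesis unfolding eigenvalue_def by blast
qed

lemma spectral_radius_stem_bud_mat:
  assumes B: "stem_bud_mat n k B" and weight: "bud_cycle_weight n k B = complex_of_real c"
    and c: "c \<ge> 0"
  shows "spectral_radius B = root (n - k) c"
proof -
  have B_carrier: "B \<in> carrier_mat n n" and kn: "k + 1 < n"
    using B unfolding stem_bud_mat_def by auto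
  define r where "r = root (n - k) c"
  have r: "r \<ge> 0" "r ^ (n - k) = c"
    using c kn unfolding r_def by (simp_all add: real_root_pow_pos2)
  have norm_le: "norm \<mu> \<le> r" if "\<mu> \<in> spectrum B" for \<mu>
  proof (cases "\<mu> = 0")
    case False
    from that obtain v where "eigenvector B v \<mu>"
      unfolding spectrum_def eigenvalue_def by auto
    from stem_bud_mat_eigenvalue_power[OF B this False]
    have "norm \<mu> ^ (n - k) = r ^ (n - k)"
      using weight r c by (simp flip: norm_power)
    then have "norm \<mu> = r"
      by (rule power_eq_imp_eq_base) (use r kn in auto)
    then show ?thesis by simp
  qed (use r in simp)
  have r_le: "r \<le> spectral_radius B"
  proof (cases "r = 0")
    case False
    have "eigenvalue B (complex_of_real r)"
      using stem_bud_mat_eigenvalueI[OF B] False weight r by (simp flip: of_real_power)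
    then show ?thesis
      using spectral_radius_mem_max(2)[OF B_carrier] kn r unfolding spectrum_def by force
  next
    case True
    then show ?thesis
      using spectral_radius_mem_max(1)[OF B_carrier] kn by force
  qed
  show ?thesis
    using spectral_radius_mem_max(1)[OF B_carrier] kn norm_le r_le unfolding r_def[symmetric]
    by (force intro: antisym)
qed

lemma stem_bud_mat_map_mat:
  assumes B: "stem_bud_mat n k B" and f: "f 0 = 0"
  shows "stem_bud_mat n k (map_mat f B)"
proof -
  have B_carrier: "B \<in> carrier_mat n n" and kn: "k + 1 < n"
    and shape: "\<And>i j. i < n \<Longrightarrow> j < n \<Longrightarrow> B $$ (i, j) \<noteq> 0 \<Longrightarrow> i = j + 1 \<or> (i = k \<and> j = n - 1)"
    using B unfolding stem_bud_mat_def by auto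
  have "i = j + 1 \<or> (i = k \<and> j = n - 1)" if "i < n" "j < n" "map_mat f B $$ (i, j) \<noteq> 0" for i j
    using that B_carrier f shape[of i j] by fastforce
  then show ?thesis
    using B_carrier kn unfolding stem_bud_mat_def by auto
qed

lemma rho_stem_bud_mat:
  assumes A: "stem_bud_mat n k A" and weight: "bud_cycle_weight n k A \<ge> 0"
  shows "rho A = root (n - k) (bud_cycle_weight n k A)"
proof -
  have A_carrier: "A \<in> carrier_mat n n" and kn: "k + 1 < n"
    using A unfolding stem_bud_mat_def by auto
  have "bud_cycle_weight n k (map_mat complex_of_real A)
      = complex_of_real (bud_cycle_weight n k A)"
  proof -
    have "(\<Prod>j\<in>{k..<n - 1}. map_mat complex_of_real A $$ (j + 1, j))
        = (\<Prod>j\<in>{k..<n - 1}. complex_of_real (A $$ (j + 1, j)))"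
      using A_carrier kn by (intro prod.cong) auto
    then show ?thesis
      using A_carrier kn unfolding bud_cycle_weight_def by (simp add: of_real_prod)
  qed
  with stem_bud_mat_map_mat[OF A, of complex_of_real] show ?thesis
    unfolding rho_def using spectral_radius_stem_bud_mat weight by simp
qed

lemma stem_bud_network_imp_stem_bud_mat:
  assumes "stem_bud_network n y A"
  shows "stem_bud_mat n (y - 1) A"
proof -
  have A_carrier: "A \<in> carrier_mat n n" and y: "1 \<le> y" "y < n"
    and shape: "\<And>p q. 1 \<le> p \<Longrightarrow> p \<le> n \<Longrightarrow> 1 \<le> q \<Longrightarrow> q \<le> n \<Longrightarrow> entry A p q \<noteq> 0
      \<Longrightarrow> p = q + 1 \<or> (p = y \<and> q = n)"
    using assms unfolding stem_bud_network_def by auto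
  have "i = j + 1 \<or> (i = y - 1 \<and> j = n - 1)" if "i < n" "j < n" "A $$ (i, j) \<noteq> 0" for i j
  proof -
    have "entry A (i + 1) (j + 1) \<noteq> 0"
      using that unfolding entry_def by simp
    then have "i + 1 = j + 2 \<or> (i + 1 = y \<and> j + 1 = n)"
      using shape[of "i + 1" "j + 1"] that by simp
    then show ?thesis by auto
  qed
  then show ?thesis
    using A_carrier y unfolding stem_bud_mat_def by auto
qed

lemma stem_bud_mat_add_edge_increment:
  assumes A: "stem_bud_mat n k A"
  shows "stem_bud_mat n k (A + edge_increment n S w)"
proof -
  let ?E = "edge_increment n S w"
  have A_carrier: "A \<in> carrier_mat n n" and kn: "k + 1 < n"
    and shape: "\<And>i j. i < n \<Longrightarrow> j < n \<Longrightarrow> A $$ (i, j) \<noteq> 0 \<Longrightarrow> i = j + 1 \<or> (i = k \<and> j = n - 1)"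
    using A unfolding stem_bud_mat_def by auto
  have E_carrier: "?E \<in> carrier_mat n n"
    unfolding edge_increment_def by simp
  have "i = j + 1 \<or> (i = k \<and> j = n - 1)" if "i < n" "j < n" "(A + ?E) $$ (i, j) \<noteq> 0" for i j
  proof (cases "A $$ (i, j) = 0")
    case True
    then have "?E $$ (i, j) \<noteq> 0" using that A_carrier E_carrier by simp
    then show ?thesis using that unfolding edge_increment_def by (simp split: if_splits)
  qed (use that shape in blast)
  then show ?thesis
    using A_carrier E_carrier kn unfolding stem_bud_mat_def by auto
qed

lemma bud_cycle_weight_add_edge_increment:
  assumes A: "stem_bud_network n y A" and S: "S \<subseteq> stem_edges n y A"
  shows "bud_cycle_weight n (y - 1) (A + edge_increment n S w) = bud_cycle_weight n (y - 1) A"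
proof -
  let ?E = "edge_increment n S w"
  have A_carrier: "A \<in> carrier_mat n n" and y: "1 \<le> y" "y < n"
    using A unfolding stem_bud_network_def by auto
  have bud_entry: "(A + ?E) $$ (y - 1, n - 1) = A $$ (y - 1, n - 1)"
    using A_carrier y unfolding edge_increment_def by auto
  show ?thesis
  proof (cases "entry A y n = 0")
    case True
    then show ?thesis
      using bud_entry unfolding bud_cycle_weight_def entry_def by simp
  next
    case False
    then have "S \<subseteq> {1..<y}"
      using S unfolding stem_edges_def by simp
    then have "(A + ?E) $$ (j + 1, j) = A $$ (j + 1, j)" if "j \<in> {y - 1..<n - 1}" for j
      using that A_carrier unfolding edge_increment_def by auto
    then show ?thesis
      using bud_entry unfolding bud_cycle_weight_def by (metis (no_types, lifting) prod.cong)
  qed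
qed

lemma bud_cycle_weight_nonneg:
  assumes "stem_bud_mat n k A" and "nonneg_mat A"
  shows "bud_cycle_weight n k A \<ge> 0"
  using assms unfolding stem_bud_mat_def nonneg_mat_def bud_cycle_weight_def
  by (intro mult_nonneg_nonneg prod_nonneg) auto

theorem corollary5p5:
  fixes n y :: nat and A :: "real mat" and S :: "nat set" and w :: "nat \<Rightarrow> real"
  assumes "stem_bud_network n y A"
    and "nonneg_mat A"
    and "rho A < 1"
    and "S \<subseteq> stem_edges n y A"
    and "\<forall>q \<in> S. w q \<ge> 0"
  shows "rho (A + edge_increment n S w) < 1"
proof -
  let ?k = "y - 1" and ?A' = "A + edge_increment n S w"
  have A: "stem_bud_mat n ?k A"
    using assms(1) by (rule stem_bud_network_imp_stem_bud_mat)
  have weight: "bud_cycle_weight n ?k ?A' = bud_cycle_weight n ?k A"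
    using assms(1,4) by (rule bud_cycle_weight_add_edge_increment)
  have weight_nonneg: "bud_cycle_weight n ?k A \<ge> 0"
    using A assms(2) by (rule bud_cycle_weight_nonneg)
  have "rho ?A' = root (n - ?k) (bud_cycle_weight n ?k ?A')"
    using stem_bud_mat_add_edge_increment[OF A] weight weight_nonneg by (intro rho_stem_bud_mat) simp_all
  also have "\<dots> = rho A"
    unfolding weight using A weight_nonneg by (rule rho_stem_bud_mat[symmetric])
  finally show ?thesis
    using assms(3) by simp
qed

end
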